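(* Autarky reduction is confluent: for every DQCNF $F$, any two sequences of autarky-reduction steps starting from $F$ and continued until no further step is possible end in the same DQCNF (i.e. with the same clause set).
   Context: A DQCNF $F$ consists of a set $X$ of universal variables, a set $Y$ of existential variables, a dependency set $D_y\subseteq X$ for each $y\in Y$, and a matrix, a finite set of clauses over $X\cup Y$. An autarky for $F$ is a partial map $\varphi$ from a subset $\mathrm{dom}(\varphi)\subseteq Y$ to Boolean functions, where $\varphi(y)$ depends only on variables in $D_y$, such that every clause $C$ of $F$ either contains no variable of $\mathrm{dom}(\varphi)$ (then $\varphi$ does not touch $C$), or becomes a tautology (identically true as a function of all remaining variables) after substituting $\varphi(y)$ for each $y\in\mathrm{dom}(\varphi)$ occurring in $C$. An autarky is trivial if it touches no clause. $F[\varphi]$ denotes the DQCNF with the same variables and dependency sets as $F$ whose matrix consists of the clauses of $F$ not touched by $\varphi$. An autarky-reduction step replaces a DQCNF $G$ by $G[\varphi]$ for some non-trivial autarky $\varphi$ of $G$. *)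

theory Defs
  imports Main
begin

type_synonym 'v lit = "'v \<times> bool"
type_synonym 'v clause = "'v lit set"
type_synonym 'v bfun = "('v \<Rightarrow> bool) \<Rightarrow> bool"

record 'v dqcnf =
  univ :: "'v set"
  exi :: "'v set"
  dep :: "'v \<Rightarrow> 'v set"
  matrix :: "'v clause set"

definition vars_cl :: "'v clause \<Rightarrow> 'v set" where
  "vars_cl C = fst ` C"

definition wf_dqcnf :: "'v dqcnf \<Rightarrow> bool" where
  "wf_dqcnf F \<longleftrightarrow> finite (univ F) \<and> finite (exi F) \<and> univ F \<inter> exi F = {}
     \<and> (\<forall>y\<in>exi F. dep F y \<subseteq> univ F)
     \<and> finite (matrix F)
     \<and> (\<forall>C\<in>matrix F. finite C \<and> vars_cl C \<subseteq> univ F \<union> exi F)"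

definition depends_only :: "'v bfun \<Rightarrow> 'v set \<Rightarrow> bool" where
  "depends_only f S \<longleftrightarrow> (\<forall>a b. (\<forall>x\<in>S. a x = b x) \<longrightarrow> f a = f b)"

definition touches :: "('v \<rightharpoonup> 'v bfun) \<Rightarrow> 'v clause \<Rightarrow> bool" where
  "touches \<phi> C \<longleftrightarrow> vars_cl C \<inter> dom \<phi> \<noteq> {}"

definition subst_val :: "('v \<rightharpoonup> 'v bfun) \<Rightarrow> ('v \<Rightarrow> bool) \<Rightarrow> 'v \<Rightarrow> bool" where
  "subst_val \<phi> \<alpha> v = (case \<phi> v of Some f \<Rightarrow> f \<alpha> | None \<Rightarrow> \<alpha> v)"

definition taut_after :: "('v \<rightharpoonup> 'v bfun) \<Rightarrow> 'v clause \<Rightarrow> bool" where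
  "taut_after \<phi> C \<longleftrightarrow> (\<forall>\<alpha>. \<exists>(v, p)\<in>C. subst_val \<phi> \<alpha> v = p)"

definition is_autarky :: "'v dqcnf \<Rightarrow> ('v \<rightharpoonup> 'v bfun) \<Rightarrow> bool" where
  "is_autarky F \<phi> \<longleftrightarrow> dom \<phi> \<subseteq> exi F
     \<and> (\<forall>y f. \<phi> y = Some f \<longrightarrow> depends_only f (dep F y))
     \<and> (\<forall>C\<in>matrix F. \<not> touches \<phi> C \<or> taut_after \<phi> C)"

definition nontrivial :: "'v dqcnf \<Rightarrow> ('v \<rightharpoonup> 'v bfun) \<Rightarrow> bool" where
  "nontrivial F \<phi> \<longleftrightarrow> (\<exists>C\<in>matrix F. touches \<phi> C)"

definition apply_aut :: "'v dqcnf \<Rightarrow> ('v \<rightharpoonup> 'v bfun) \<Rightarrow> 'v dqcnf" where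
  "apply_aut F \<phi> = F\<lparr>matrix := {C\<in>matrix F. \<not> touches \<phi> C}\<rparr>"

definition aut_step :: "'v dqcnf \<Rightarrow> 'v dqcnf \<Rightarrow> bool" where
  "aut_step G G' \<longleftrightarrow> (\<exists>\<phi>. is_autarky G \<phi> \<and> nontrivial G \<phi> \<and> G' = apply_aut G \<phi>)"

end

theory Submission
  imports Defs
begin

text \<open>Autarkies compose: if \<chi> is an autarky of F and \<psi> one of F[\<chi>], then \<psi> ++ \<chi> is an
  autarky of F with F[\<psi> ++ \<chi>] = F[\<chi>][\<psi>]. The substituted functions only read universal
  variables, which no autarky assigns, so each clause stays satisfied by the part of the
  composite that satisfied it before. Hence every reduction sequence from F ends in F[\<chi>]
  for a single autarky \<chi> of F, and if no further step is possible, no autarky of F touches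
  a remaining clause: the result is the lean kernel of F, the clauses touched by no autarky.\<close>

definition lean_kernel :: "'v dqcnf \<Rightarrow> 'v dqcnf" where
  "lean_kernel F = F\<lparr>matrix := {C \<in> matrix F. \<forall>\<phi>. is_autarky F \<phi> \<longrightarrow> \<not> touches \<phi> C}\<rparr>"

lemma taut_after_transfer:
  assumes taut: "taut_after \<phi> C"
    and agree: "\<forall>v\<in>vars_cl C. \<phi> v \<noteq> None \<longrightarrow> \<chi> v = \<phi> v"
    and dep_\<phi>: "\<forall>y f. \<phi> y = Some f \<longrightarrow> depends_only f U"
    and dom_\<chi>: "dom \<chi> \<inter> U = {}"
  shows "taut_after \<chi> C"
  unfolding taut_after_def
proof
  fix \<alpha>
  define \<alpha>' where "\<alpha>' = subst_val \<chi> \<alpha>"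
  have on_U: "\<forall>x\<in>U. \<alpha>' x = \<alpha> x"
    using dom_\<chi> by (auto simp: \<alpha>'_def subst_val_def split: option.splits)
  have same_val: "subst_val \<phi> \<alpha>' v = subst_val \<chi> \<alpha> v" if "v \<in> vars_cl C" for v
  proof (cases "\<phi> v")
    case None
    then show ?thesis by (simp add: subst_val_def \<alpha>'_def)
  next
    case (Some f)
    with agree that have "\<chi> v = Some f" by auto
    moreover have "f \<alpha>' = f \<alpha>"
      using dep_\<phi> Some on_U unfolding depends_only_def by blast
    ultimately show ?thesis using Some by (simp add: subst_val_def)
  qed
  from taut obtain v p where "(v, p) \<in> C" "subst_val \<phi> \<alpha>' v = p"
    unfolding taut_after_def by blast
  moreover from \<open>(v, p) \<in> C\<close> have "v \<in> vars_cl C" by (force simp: vars_cl_def)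
  ultimately show "\<exists>(v, p)\<in>C. subst_val \<chi> \<alpha> v = p" using same_val by blast
qed

lemma autarky_depends_only_univ:
  assumes "wf_dqcnf F" "is_autarky F \<phi>" "\<phi> y = Some f"
  shows "depends_only f (univ F)"
proof -
  from assms(2,3) have "y \<in> exi F" "depends_only f (dep F y)"
    unfolding is_autarky_def by auto
  with assms(1) have "dep F y \<subseteq> univ F" unfolding wf_dqcnf_def by blast
  with \<open>depends_only f (dep F y)\<close> show ?thesis
    unfolding depends_only_def by blast
qed

lemma autarky_dom_inter_univ:
  assumes "wf_dqcnf F" "is_autarky F \<phi>"
  shows "dom \<phi> \<inter> univ F = {}"
  using assms unfolding is_autarky_def wf_dqcnf_def by auto

lemma wf_dqcnf_apply_aut: "wf_dqcnf F \<Longrightarrow> wf_dqcnf (apply_aut F \<chi>)"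
  by (auto simp: wf_dqcnf_def apply_aut_def)

lemma is_autarky_apply_aut: "is_autarky F \<phi> \<Longrightarrow> is_autarky (apply_aut F \<chi>) \<phi>"
  by (auto simp: is_autarky_def apply_aut_def)

lemma touches_map_add_iff: "touches (\<psi> ++ \<chi>) C \<longleftrightarrow> touches \<chi> C \<or> touches \<psi> C"
  by (auto simp: touches_def)

lemma apply_aut_apply_aut: "apply_aut (apply_aut F \<chi>) \<psi> = apply_aut F (\<psi> ++ \<chi>)"
  by (auto simp: apply_aut_def touches_map_add_iff)

lemma is_autarky_map_add:
  assumes wf: "wf_dqcnf F"
    and aut_\<chi>: "is_autarky F \<chi>"
    and aut_\<psi>: "is_autarky (apply_aut F \<chi>) \<psi>"
  shows "is_autarky F (\<psi> ++ \<chi>)"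
  unfolding is_autarky_def
proof (intro conjI ballI allI impI)
  let ?G = "apply_aut F \<chi>"
  have same_prefix: "univ ?G = univ F" "exi ?G = exi F" "dep ?G = dep F"
    by (simp_all add: apply_aut_def)
  have dom_inter_univ: "dom (\<psi> ++ \<chi>) \<inter> univ F = {}"
    using autarky_dom_inter_univ[OF wf aut_\<chi>]
      autarky_dom_inter_univ[OF wf_dqcnf_apply_aut[OF wf] aut_\<psi>] same_prefix by auto
  show "dom (\<psi> ++ \<chi>) \<subseteq> exi F"
    using aut_\<chi> aut_\<psi> same_prefix unfolding is_autarky_def by auto
  show "depends_only f (dep F y)" if "(\<psi> ++ \<chi>) y = Some f" for y f
    using that aut_\<chi> aut_\<psi> same_prefix unfolding is_autarky_def
    by (auto simp: map_add_Some_iff)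
  fix C assume C: "C \<in> matrix F"
  consider "touches \<chi> C" | "\<not> touches \<chi> C" "touches \<psi> C" | "\<not> touches (\<psi> ++ \<chi>) C"
    using touches_map_add_iff by blast
  then show "\<not> touches (\<psi> ++ \<chi>) C \<or> taut_after (\<psi> ++ \<chi>) C"
  proof cases
    case 1
    with aut_\<chi> C have "taut_after \<chi> C" unfolding is_autarky_def by blast
    then have "taut_after (\<psi> ++ \<chi>) C"
      by (rule taut_after_transfer[OF _ _ _ dom_inter_univ])
        (auto intro: autarky_depends_only_univ[OF wf aut_\<chi>])
    then show ?thesis ..
  next
    case 2
    with C have "C \<in> matrix ?G" by (simp add: apply_aut_def)
    with 2 aut_\<psi> have "taut_after \<psi> C" unfolding is_autarky_def by blast
    moreover from 2 have "\<forall>v\<in>vars_cl C. \<psi> v \<noteq> None \<longrightarrow> (\<psi> ++ \<chi>) v = \<psi> v"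
      by (auto simp: touches_def map_add_def split: option.splits)
    ultimately have "taut_after (\<psi> ++ \<chi>) C"
      by (rule taut_after_transfer[OF _ _ _ dom_inter_univ])
        (use autarky_depends_only_univ[OF wf_dqcnf_apply_aut[OF wf] aut_\<psi>] same_prefix in auto)
    then show ?thesis ..
  qed simp
qed

lemma reachable_eq_apply_aut:
  assumes wf: "wf_dqcnf F" and "aut_step\<^sup>*\<^sup>* F G"
  shows "\<exists>\<chi>. is_autarky F \<chi> \<and> G = apply_aut F \<chi>"
  using assms(2)
proof induction
  case base
  have "is_autarky F Map.empty" "F = apply_aut F Map.empty"
    by (simp_all add: is_autarky_def apply_aut_def touches_def)
  then show ?case by blast
next
  case (step G G')
  from step.IH obtain \<chi> where "is_autarky F \<chi>" "G = apply_aut F \<chi>" by blast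
  moreover from step.hyps(2) obtain \<psi> where "is_autarky G \<psi>" "G' = apply_aut G \<psi>"
    unfolding aut_step_def by blast
  ultimately show ?case
    using is_autarky_map_add[OF wf] apply_aut_apply_aut by metis
qed

lemma terminal_reduct_eq_lean_kernel:
  assumes aut_\<chi>: "is_autarky F \<chi>" and terminal: "\<nexists>G'. aut_step (apply_aut F \<chi>) G'"
  shows "apply_aut F \<chi> = lean_kernel F"
proof -
  have "\<not> touches \<phi> C" if "C \<in> matrix (apply_aut F \<chi>)" "is_autarky F \<phi>" for C \<phi>
  proof
    assume "touches \<phi> C"
    with that have "aut_step (apply_aut F \<chi>) (apply_aut (apply_aut F \<chi>) \<phi>)"
      unfolding aut_step_def nontrivial_def using is_autarky_apply_aut by blast
    with terminal show False by blast
  qed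
  then have "{C \<in> matrix F. \<not> touches \<chi> C} = {C \<in> matrix F. \<forall>\<phi>. is_autarky F \<phi> \<longrightarrow> \<not> touches \<phi> C}"
    using aut_\<chi> by (auto simp: apply_aut_def)
  then show ?thesis by (simp add: apply_aut_def lean_kernel_def)
qed

theorem lemma2:
  fixes F G H :: "'v dqcnf"
  assumes "wf_dqcnf F"
    and "aut_step\<^sup>*\<^sup>* F G" and "\<nexists>G'. aut_step G G'"
    and "aut_step\<^sup>*\<^sup>* F H" and "\<nexists>H'. aut_step H H'"
  shows "G = H"
proof -
  obtain \<chi> where "is_autarky F \<chi>" "G = apply_aut F \<chi>"
    using reachable_eq_apply_aut[OF assms(1,2)] by blast
  with assms(3) have "G = lean_kernel F" using terminal_reduct_eq_lean_kernel by blast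
  moreover obtain \<eta> where "is_autarky F \<eta>" "H = apply_aut F \<eta>"
    using reachable_eq_apply_aut[OF assms(1,4)] by blast
  with assms(5) have "H = lean_kernel F" using terminal_reduct_eq_lean_kernel by blast
  ultimately show ?thesis by simp
qed

end
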